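(* If $R\le c/\delta$, then for every $n\ge 1$ we have $B^d_n+1\le B^s_n$, and the pair $\phi_{n+1}(x)=(a^s_{n+1}(x),a^d_n(x))$ satisfies, for $x\ge 0$: $\phi_{n+1}(x)=(l,1)$ if $0\le x\le B^d_n$; $\phi_{n+1}(x)=(l,0)$ if $B^d_n<x\le B^s_n$; $\phi_{n+1}(x)=(h,0)$ if $x>B^s_n$.
   Context: Parameters: $\lambda>0$, $0<\mu_l<\mu_h$, $\delta=\mu_h-\mu_l$, $R\ge 0$, $c>0$, and $h:\{0,1,2,\dots\}\to\mathbb{R}$ nondecreasing and convex with $h(0)=0$; the rates are normalized so that $\lambda+\mu_h+\beta=1$ for a discount rate $\beta>0$. Finite-horizon value functions on $S=\{0,1,2,\dots\}\times\{0,1\}$: $v_0\equiv 0$ and for $n\ge 0$: $v_{n+1}(0,0)=\lambda v_n(0,1)+\mu_h v_n(0,0)$; $v_{n+1}(x,0)=-h(x)+\lambda v_n(x,1)+\mu_l v_n(x-1,0)+\max\{\delta v_n(x,0),-c+\delta v_n(x-1,0)\}$ for $x\ge1$; $v_{n+1}(x,1)=\max\{R+v_{n+1}(x+1,0),v_{n+1}(x,0)\}$ for $x\ge 0$. Define $\Delta_n(x,i)=v_n(x,i)-v_n(x+1,i)$. Optimal decisions: admission in state $(x,1)$ with $n\ge1$ steps remaining: $a^d_{n}(x)=1$ if $\Delta_{n}(x,0)\le R$, else $0$; service rate in state $(x,0)$ with $n+1$ steps remaining: $a^s_{n+1}(0)=l$, and for $x>0$, $a^s_{n+1}(x)=l$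 if $\Delta_n(x-1,0)\le c/\delta$, else $h$. Threshold function: $T_f(\theta)=\sup\{k\ge0: f(k)\le\theta\}$ with $\sup\emptyset=-1$ ($+\infty$ allowed). Thresholds: $B^s_n=1+T_{\Delta_n(\cdot,0)}(c/\delta)$ and $B^d_n=T_{\Delta_n(\cdot,0)}(R)$. *)

theory Defs
  imports Complex_Main "HOL-Library.Extended_Real"
begin

text \<open>Parameters: lam (arrival rate), mul, muh (service rates),
  c (cost of high rate), R (admission reward), h (holding cost).
  vs0 n x = v_n(x,0), vs1 n x = v_n(x,1). delta = muh - mul.\<close>

primrec vs0 :: "real \<Rightarrow> real \<Rightarrow> real \<Rightarrow> real \<Rightarrow> real \<Rightarrow> (nat \<Rightarrow> real) \<Rightarrow> nat \<Rightarrow> nat \<Rightarrow> real" where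
  "vs0 lam mul muh c R h 0 x = 0"
| "vs0 lam mul muh c R h (Suc n) x =
     (let w = vs0 lam mul muh c R h n;
          u = (\<lambda>y. if n = 0 then 0 else max (R + w (Suc y)) (w y))
      in if x = 0 then lam * u 0 + muh * w 0
         else - h x + lam * u x + mul * w (x - 1)
              + max ((muh - mul) * w x) (- c + (muh - mul) * w (x - 1)))"

definition vs1 :: "real \<Rightarrow> real \<Rightarrow> real \<Rightarrow> real \<Rightarrow> real \<Rightarrow> (nat \<Rightarrow> real) \<Rightarrow> nat \<Rightarrow> nat \<Rightarrow> real" where
  "vs1 lam mul muh c R h n x =
     (if n = 0 then 0
      else max (R + vs0 lam mul muh c R h n (Suc x)) (vs0 lam mul muh c R h n x))"

definition Dlt0 :: "real \<Rightarrow> real \<Rightarrow> real \<Rightarrow> real \<Rightarrow> real \<Rightarrow> (nat \<Rightarrow> real) \<Rightarrow> nat \<Rightarrow> nat \<Rightarrow> real" where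
  "Dlt0 lam mul muh c R h n x = vs0 lam mul muh c R h n x - vs0 lam mul muh c R h n (Suc x)"

definition Thr :: "(nat \<Rightarrow> real) \<Rightarrow> real \<Rightarrow> ereal" where
  "Thr f \<theta> = (if {k. f k \<le> \<theta>} = {} then -1 else Sup ((\<lambda>k. ereal (real k)) ` {k. f k \<le> \<theta>}))"

definition Bs :: "real \<Rightarrow> real \<Rightarrow> real \<Rightarrow> real \<Rightarrow> real \<Rightarrow> (nat \<Rightarrow> real) \<Rightarrow> nat \<Rightarrow> ereal" where
  "Bs lam mul muh c R h n = 1 + Thr (Dlt0 lam mul muh c R h n) (c / (muh - mul))"

definition Bd :: "real \<Rightarrow> real \<Rightarrow> real \<Rightarrow> real \<Rightarrow> real \<Rightarrow> (nat \<Rightarrow> real) \<Rightarrow> nat \<Rightarrow> ereal" where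
  "Bd lam mul muh c R h n = Thr (Dlt0 lam mul muh c R h n) R"

datatype rate = Low | High

text \<open>Admission decision a^d_n(x) (1 = admit, 0 = reject), for n >= 1 steps remaining.\<close>
definition adm :: "real \<Rightarrow> real \<Rightarrow> real \<Rightarrow> real \<Rightarrow> real \<Rightarrow> (nat \<Rightarrow> real) \<Rightarrow> nat \<Rightarrow> nat \<Rightarrow> nat" where
  "adm lam mul muh c R h n x = (if Dlt0 lam mul muh c R h n x \<le> R then 1 else 0)"

text \<open>Service-rate decision a^s_{n+1}(x) with n+1 steps remaining.\<close>
definition srv :: "real \<Rightarrow> real \<Rightarrow> real \<Rightarrow> real \<Rightarrow> real \<Rightarrow> (nat \<Rightarrow> real) \<Rightarrow> nat \<Rightarrow> nat \<Rightarrow> rate" where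
  "srv lam mul muh c R h n x =
     (if x = 0 then Low
      else if Dlt0 lam mul muh c R h n (x - 1) \<le> c / (muh - mul) then Low else High)"

end

theory Submission
  imports Defs
begin

(* Everything rests on one structural fact about the value functions: for every
   horizon n the differences D_n(x) = v_n(x,0) - v_n(x+1,0) are nonnegative and
   nondecreasing in x (convexity of v_n).  This is proved by induction on n: the
   one-step recursion, differenced in x, writes D_{n+1}(x) as a sum of the
   holding-cost increment, an admission term, a low-rate service term and a
   service-rate choice term, each of which inherits nonnegativity and
   monotonicity from D_n.

   Independently, we show that for ANY nondecreasing sequence D and thresholds
   R <= theta, the threshold functions T_D(R) and 1 + T_D(theta) split the state
   space into the three regions of the proposition, described by the tests
   D(x) <= R and D(x-1) <= theta. *)

lemma Thr_empty: "{k. f k \<le> t} = {} \<Longrightarrow> Thr f t = -1"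
  unfolding Thr_def by (rule if_P)

lemma Thr_nonempty:
  "{k. f k \<le> t} \<noteq> {} \<Longrightarrow> Thr f t = Sup ((\<lambda>k. ereal (real k)) ` {k. f k \<le> t})"
  unfolding Thr_def by (rule if_not_P)

lemma Thr_ge_minus_one: "-1 \<le> Thr f t"
proof (cases "{k. f k \<le> t} = {}")
  case False
  then obtain k where "f k \<le> t" by auto
  then have "ereal (real k) \<le> Sup ((\<lambda>k. ereal (real k)) ` {k. f k \<le> t})"
    by (intro Sup_upper) auto
  moreover have "-1 \<le> ereal (real k)" by (rule order_trans[of _ 0]) auto
  ultimately show ?thesis using Thr_nonempty[OF False] by simp
qed (simp add: Thr_empty)

text \<open>Raising the level enlarges the sublevel set, hence raises the threshold.\<close>
lemma Thr_mono:
  assumes "t1 \<le> t2"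
  shows "Thr f t1 \<le> Thr f t2"
proof (cases "{k. f k \<le> t1} = {}")
  case True
  then show ?thesis using Thr_ge_minus_one[of f t2] by (simp add: Thr_empty)
next
  case False
  have sub: "{k. f k \<le> t1} \<subseteq> {k. f k \<le> t2}" using assms by auto
  then have ne: "{k. f k \<le> t2} \<noteq> {}" using False by auto
  have "Sup ((\<lambda>k. ereal (real k)) ` {k. f k \<le> t1})
      \<le> Sup ((\<lambda>k. ereal (real k)) ` {k. f k \<le> t2})"
    using sub by (intro Sup_subset_mono) auto
  then show ?thesis using Thr_nonempty[OF False] Thr_nonempty[OF ne] by simp
qed

lemma above_Thr:
  assumes "Thr f t < ereal (real x)"
  shows "t < f x"
proof (rule ccontr)
  assume "\<not> t < f x"
  then have fx: "f x \<le> t" by simp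
  then have ne: "{k. f k \<le> t} \<noteq> {}" by auto
  have "ereal (real x) \<le> Sup ((\<lambda>k. ereal (real k)) ` {k. f k \<le> t})"
    using fx by (intro Sup_upper) auto
  with assms show False by (simp add: Thr_nonempty[OF ne])
qed

text \<open>For a nondecreasing sequence the sublevel set is an initial segment, so every
  point up to the threshold lies in it.\<close>
lemma upto_Thr:
  assumes "mono f" and "ereal (real x) \<le> Thr f t"
  shows "f x \<le> t"
proof (rule ccontr)
  assume "\<not> f x \<le> t"
  then have below_x: "real k \<le> real x - 1" if "f k \<le> t" for k
  proof -
    have "k < x" using that monoD[OF assms(1), of x k] \<open>\<not> f x \<le> t\<close> by (cases "x \<le> k") auto
    then show ?thesis by linarith
  qed
  show False
  proof (cases "{k. f k \<le> t} = {}")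
    case True
    then have "ereal (real x) \<le> -1" using assms(2) by (simp add: Thr_empty)
    moreover have "(-1::ereal) < ereal (real x)" by (rule less_le_trans[of _ 0]) auto
    ultimately show False by simp
  next
    case False
    have "Sup ((\<lambda>k. ereal (real k)) ` {k. f k \<le> t}) \<le> ereal (real x - 1)"
      using below_x by (intro Sup_least) auto
    then have "ereal (real x) \<le> ereal (real x - 1)"
      using assms(2) Thr_nonempty[OF False] by (metis order_trans)
    then show False by simp
  qed
qed

text \<open>Shifting by one: the service threshold is 1 + T, tested at the predecessor x - 1.\<close>
lemma ereal_le_one_plus_iff:
  "0 < x \<Longrightarrow> ereal (real x) \<le> 1 + T \<longleftrightarrow> ereal (real (x - 1)) \<le> T"
  by (cases T) (auto simp: of_nat_diff one_ereal_def)

lemma policy_admit_region: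
  assumes "mono D" and "R \<le> \<theta>" and "ereal (real x) \<le> Thr D R"
  shows "D x \<le> R \<and> (0 < x \<longrightarrow> D (x - 1) \<le> \<theta>)"
proof -
  have "D x \<le> R" using upto_Thr[OF assms(1,3)] .
  moreover have "D (x - 1) \<le> D x" using monoD[OF assms(1)] by simp
  ultimately show ?thesis using assms(2) by linarith
qed

lemma policy_reject_low_region:
  assumes "mono D" and "Thr D R < ereal (real x)" and "ereal (real x) \<le> 1 + Thr D \<theta>"
  shows "R < D x \<and> (0 < x \<longrightarrow> D (x - 1) \<le> \<theta>)"
  using above_Thr[OF assms(2)] upto_Thr[OF assms(1)] assms(3)
  by (auto simp: ereal_le_one_plus_iff)

lemma policy_high_region:
  assumes "mono D" and "R \<le> \<theta>" and "1 + Thr D \<theta> < ereal (real x)"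
  shows "0 < x \<and> \<theta> < D (x - 1) \<and> R < D x"
proof -
  have "0 < x"
    using assms(3) Thr_ge_minus_one[of D \<theta>]
    by (cases "Thr D \<theta>") (auto simp: one_ereal_def)
  moreover have "\<not> ereal (real x) \<le> 1 + Thr D \<theta>" using assms(3) by simp
  ultimately have "\<not> ereal (real (x - 1)) \<le> Thr D \<theta>" using ereal_le_one_plus_iff by blast
  then have "Thr D \<theta> < ereal (real (x - 1))" by (meson not_le)
  then have "\<theta> < D (x - 1)" by (rule above_Thr)
  moreover have "D (x - 1) \<le> D x" using monoD[OF assms(1)] by simp
  ultimately show ?thesis using \<open>0 < x\<close> assms(2) by linarith
qed

text \<open>Differencing the admission maximum max(R + v(x+1), v(x)) in x, where a, b, e are
  the values at x, x+1, x+2: when the differences a - b \<le> b - e are nondecreasing, the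
  result is the difference b - e capped by max(a - b, R).\<close>
lemma max_admission_diff:
  fixes a b e R :: real
  assumes "a - b \<le> b - e"
  shows "max (R + b) a - max (R + e) b = min (b - e) (max (a - b) R)"
  using assms by (simp add: max_def min_def)

text \<open>Differencing the service-rate maximum max(\<delta> v(x), -c + \<delta> v(x-1)) in x, with
  a, b, e the values \<delta> v at x-1, x, x+1.\<close>
lemma max_service_diff:
  fixes a b e c :: real
  assumes "a - b \<le> b - e"
  shows "max b (- c + a) - max e (- c + b) = max (a - b) (min (b - e) c)"
  using assms by (simp add: max_def min_def)

context
  fixes lam mul muh c R :: real and h :: "nat \<Rightarrow> real"
  assumes rates: "0 \<le> lam" "0 \<le> mul" "mul \<le> muh" and cost: "0 \<le> c"
    and h_mono: "mono h"
    and h_convex: "\<And>x. h (Suc x) - h x \<le> h (Suc (Suc x)) - h (Suc x)"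
    and h_zero: "h 0 = 0"
begin

lemma Dlt0_Suc:
  fixes n x :: nat
  defines "d \<equiv> Dlt0 lam mul muh c R h n"
  assumes d_nonneg: "\<And>x. 0 \<le> d x" and d_mono: "\<And>x. d x \<le> d (Suc x)"
  shows "Dlt0 lam mul muh c R h (Suc n) x =
      (h (Suc x) - h x)
      + lam * (if n = 0 then 0 else min (d (Suc x)) (max (d x) R))
      + mul * (if x = 0 then 0 else d (x - 1))
      + max ((muh - mul) * (if x = 0 then 0 else d (x - 1))) (min ((muh - mul) * d x) c)"
proof -
  define w where "w = vs0 lam mul muh c R h n"
  define \<delta> where "\<delta> = muh - mul"
  define U where "U y = (if n = 0 then 0 else max (R + w (Suc y)) (w y))" for y
  have d_w: "d y = w y - w (Suc y)" for y by (simp add: d_def w_def Dlt0_def)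
  have \<delta>_nonneg: "0 \<le> \<delta>" using rates by (simp add: \<delta>_def)
  have U_diff: "U y - U (Suc y) = (if n = 0 then 0 else min (d (Suc y)) (max (d y) R))" for y
    using max_admission_diff[of "w y" "w (Suc y)" "w (Suc (Suc y))" R] d_mono[of y]
    by (simp add: U_def d_w)
  have service_diff: "max (\<delta> * w (Suc y)) (- c + \<delta> * w y) - max (\<delta> * w (Suc (Suc y))) (- c + \<delta> * w (Suc y))
      = max (\<delta> * d y) (min (\<delta> * d (Suc y)) c)" for y
    using max_service_diff[of "\<delta> * w y" "\<delta> * w (Suc y)" "\<delta> * w (Suc (Suc y))" c]
      mult_left_mono[OF d_mono[of y] \<delta>_nonneg]
    by (simp add: d_w right_diff_distrib)
  have vs0_Suc: "vs0 lam mul muh c R h (Suc n) x = (if x = 0 then lam * U 0 + muh * w 0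
      else - h x + lam * U x + mul * w (x - 1) + max (\<delta> * w x) (- c + \<delta> * w (x - 1)))" for x
    by (simp add: w_def U_def \<delta>_def Let_def)
  show ?thesis
  proof (cases x)
    case 0
    have "\<delta> * w 0 - max (\<delta> * w 1) (- c + \<delta> * w 0) = min (\<delta> * d 0) c"
      by (simp add: d_w max_def min_def algebra_simps)
    moreover have "0 \<le> \<delta> * d 0" using d_nonneg \<delta>_nonneg by simp
    moreover have "muh * w 0 = mul * w 0 + \<delta> * w 0" by (simp add: \<delta>_def algebra_simps)
    ultimately show ?thesis
      using 0 U_diff[of 0] h_zero cost unfolding Dlt0_def vs0_Suc \<delta>_def[symmetric]
      by (simp add: algebra_simps max_def min_def)
  next
    case (Suc y)
    then show ?thesis
      using U_diff[of x] service_diff[of y] unfolding Dlt0_def vs0_Suc \<delta>_def[symmetric]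
      by (simp add: d_w algebra_simps)
  qed
qed

lemma Dlt0_nonneg_mono:
  "0 \<le> Dlt0 lam mul muh c R h n x \<and> Dlt0 lam mul muh c R h n x \<le> Dlt0 lam mul muh c R h n (Suc x)"
proof (induction n arbitrary: x)
  case 0
  show ?case by (simp add: Dlt0_def)
next
  case (Suc n)
  define d where "d = Dlt0 lam mul muh c R h n"
  define \<delta> where "\<delta> = muh - mul"
  have d_nonneg: "0 \<le> d y" and d_mono: "d y \<le> d (Suc y)" for y
    using Suc.IH by (auto simp: d_def)
  define A where "A y = (if n = 0 then 0 else min (d (Suc y)) (max (d y) R))" for y
  define P where "P y = (if y = 0 then 0 else d (y - 1))" for y
  have rec: "Dlt0 lam mul muh c R h (Suc n) y
      = (h (Suc y) - h y) + lam * A y + mul * P y + max (\<delta> * P y) (min (\<delta> * d y) c)" for y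
    using Dlt0_Suc[of n y] d_nonneg d_mono by (simp add: A_def P_def d_def \<delta>_def)
  have \<delta>_nonneg: "0 \<le> \<delta>" using rates by (simp add: \<delta>_def)
  text \<open>Each summand is nonnegative and nondecreasing in the queue length.\<close>
  have "0 \<le> h (Suc x) - h x" using monoD[OF h_mono, of x "Suc x"] by simp
  moreover have "0 \<le> A x" "A x \<le> A (Suc x)"
    using d_nonneg[of x] d_mono[of x] d_mono[of "Suc x"] by (auto simp: A_def max_def min_def)
  moreover have "0 \<le> P x" "P x \<le> P (Suc x)"
    using d_nonneg d_mono by (cases x; simp add: P_def)+
  moreover have "\<delta> * d x \<le> \<delta> * d (Suc x)" using mult_left_mono[OF d_mono \<delta>_nonneg] .
  ultimately have "0 \<le> lam * A x" "lam * A x \<le> lam * A (Suc x)"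
      "0 \<le> mul * P x" "mul * P x \<le> mul * P (Suc x)"
      "0 \<le> \<delta> * P x" "\<delta> * P x \<le> \<delta> * P (Suc x)"
      "0 \<le> h (Suc x) - h x" "\<delta> * d x \<le> \<delta> * d (Suc x)"
    using rates \<delta>_nonneg by (auto intro: mult_left_mono)
  then show ?case
    unfolding rec using h_convex[of x] by (simp add: max_def min_def)
qed

lemma mono_Dlt0: "mono (Dlt0 lam mul muh c R h n)"
  unfolding mono_iff_le_Suc using Dlt0_nonneg_mono by blast

end

theorem proposition1:
  fixes lam mul muh \<beta> c R :: real and h :: "nat \<Rightarrow> real"
  assumes "lam > 0" and "0 < mul" and "mul < muh" and "R \<ge> 0" and "c > 0"
    and "\<beta> > 0" and "lam + muh + \<beta> = 1"
    and "mono h" and "\<And>x. h (Suc x) - h x \<le> h (Suc (Suc x)) - h (Suc x)" and "h 0 = 0"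
    and "R \<le> c / (muh - mul)"
  shows "\<forall>n\<ge>1.
     Bd lam mul muh c R h n + 1 \<le> Bs lam mul muh c R h n \<and>
     (\<forall>x::nat.
        (ereal (real x) \<le> Bd lam mul muh c R h n \<longrightarrow>
           (srv lam mul muh c R h n x, adm lam mul muh c R h n x) = (Low, 1)) \<and>
        (Bd lam mul muh c R h n < ereal (real x) \<and> ereal (real x) \<le> Bs lam mul muh c R h n \<longrightarrow>
           (srv lam mul muh c R h n x, adm lam mul muh c R h n x) = (Low, 0)) \<and>
        (ereal (real x) > Bs lam mul muh c R h n \<longrightarrow>
           (srv lam mul muh c R h n x, adm lam mul muh c R h n x) = (High, 0)))"
proof (intro allI impI conjI)
  fix n x :: nat
  define D where "D = Dlt0 lam mul muh c R h n"
  define \<theta> where "\<theta> = c / (muh - mul)"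
  have mono_D: "mono D"
    unfolding D_def using assms by (intro mono_Dlt0) auto
  have R_le: "R \<le> \<theta>" using assms(11) by (simp add: \<theta>_def)
  have Bd: "Bd lam mul muh c R h n = Thr D R" and Bs: "Bs lam mul muh c R h n = 1 + Thr D \<theta>"
    by (simp_all add: Bd_def Bs_def D_def \<theta>_def)
  have decisions: "srv lam mul muh c R h n x = (if x = 0 \<or> D (x - 1) \<le> \<theta> then Low else High)"
      "adm lam mul muh c R h n x = (if D x \<le> R then 1 else 0)"
    by (simp_all add: srv_def adm_def D_def \<theta>_def)
  show "Bd lam mul muh c R h n + 1 \<le> Bs lam mul muh c R h n"
    unfolding Bd Bs using Thr_mono[OF R_le, of D] by (simp add: add.commute add_left_mono)
  show "(srv lam mul muh c R h n x, adm lam mul muh c R h n x) = (Low, 1)"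
    if "ereal (real x) \<le> Bd lam mul muh c R h n"
    using policy_admit_region[OF mono_D R_le] that by (auto simp: Bd decisions)
  show "(srv lam mul muh c R h n x, adm lam mul muh c R h n x) = (Low, 0)"
    if "Bd lam mul muh c R h n < ereal (real x) \<and> ereal (real x) \<le> Bs lam mul muh c R h n"
    using policy_reject_low_region[OF mono_D, of R x \<theta>] that by (auto simp: Bd Bs decisions)
  show "(srv lam mul muh c R h n x, adm lam mul muh c R h n x) = (High, 0)"
    if "ereal (real x) > Bs lam mul muh c R h n"
    using policy_high_region[OF mono_D R_le, of x] that by (auto simp: Bs decisions)
qed

end
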